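(* For every integer $N\ge1$, \[ E\sup_{0\le t\le1}|X_N(t)-\hat X_N(t)|^2\le 136L^8N^{-1/2}. \]
   Context: Fix an integer $d\ge1$ and $L\ge1$. Let $\sigma:\mathbb R^d\to\mathbb R^{d\times d}$, $b:\mathbb R^d\to\mathbb R^d$ satisfy $|\sigma(x)|\le L$, $|b(x)|\le L$, $|\sigma(x)-\sigma(y)|\le L|x-y|$, $|b(x)-b(y)|\le L|x-y|$ for all $x,y$. Let $\xi(n)$, $n\ge1$, be i.i.d. random vectors in $\mathbb R^d$ with $E\xi(1)=0$, $E(\xi_i(1)\xi_j(1))=\delta_{ij}$, $|\xi(1)|\le L$ a.s. Fix $x_0$. Define $X_N(0)=x_0$, $X_N((n+1)/N)=X_N(n/N)+N^{-1/2}\sigma(X_N(n/N))\xi(n+1)+N^{-1}b(X_N(n/N))$ for $0\le n\le N-1$, and $X_N(t)=X_N(n/N)$ for $n/N\le t<(n+1)/N$. Let $[\cdot]$ be the integer part, $n_k=k[N^{1/4}]$, $k_N=[N/[N^{1/4}]]$, and $k_N(t)=\max\{k:\ n_k\le Nt\}$. Define for $t\in[0,1]$ \[ \hat X_N(t)=x_0+N^{-1/2}\sum_{0\le k\le k_N(t)}\Big(\sigma(X_N(n_k/N))\sum_{n_k<l\le n_{k+1}\wedge[Nt]}\xi(l)+N^{-1/2}b(X_N(n_k/N))\,(n_{k+1}\wedge[Nt]-n_k)\Big). \] *)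

theory Defs
  imports "HOL-Probability.Probability"
begin

text \<open>Grid values of the Euler-type scheme: XN ... N n w is X_N(n/N).\<close>
primrec XN :: "(real^'d \<Rightarrow> real^'d^'d) \<Rightarrow> (real^'d \<Rightarrow> real^'d) \<Rightarrow> (nat \<Rightarrow> 'a \<Rightarrow> real^'d)
    \<Rightarrow> real^'d \<Rightarrow> nat \<Rightarrow> nat \<Rightarrow> 'a \<Rightarrow> real^'d" where
  "XN \<sigma> b \<xi> x0 N 0 w = x0"
| "XN \<sigma> b \<xi> x0 N (Suc n) w =
     XN \<sigma> b \<xi> x0 N n w
     + inverse (sqrt (real N)) *\<^sub>R (\<sigma> (XN \<sigma> b \<xi> x0 N n w) *v \<xi> (Suc n) w)
     + inverse (real N) *\<^sub>R b (XN \<sigma> b \<xi> x0 N n w)"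

definition Xt :: "(real^'d \<Rightarrow> real^'d^'d) \<Rightarrow> (real^'d \<Rightarrow> real^'d) \<Rightarrow> (nat \<Rightarrow> 'a \<Rightarrow> real^'d)
    \<Rightarrow> real^'d \<Rightarrow> nat \<Rightarrow> real \<Rightarrow> 'a \<Rightarrow> real^'d" where
  "Xt \<sigma> b \<xi> x0 N t w = XN \<sigma> b \<xi> x0 N (nat \<lfloor>real N * t\<rfloor>) w"

definition blk :: "nat \<Rightarrow> nat" where
  "blk N = nat \<lfloor>root 4 (real N)\<rfloor>"

definition nk :: "nat \<Rightarrow> nat \<Rightarrow> nat" where
  "nk N k = k * blk N"

definition kNt :: "nat \<Rightarrow> real \<Rightarrow> nat" where
  "kNt N t = Max {k. real (nk N k) \<le> real N * t}"

definition Xhat :: "(real^'d \<Rightarrow> real^'d^'d) \<Rightarrow> (real^'d \<Rightarrow> real^'d) \<Rightarrow> (nat \<Rightarrow> 'a \<Rightarrow> real^'d)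
    \<Rightarrow> real^'d \<Rightarrow> nat \<Rightarrow> real \<Rightarrow> 'a \<Rightarrow> real^'d" where
  "Xhat \<sigma> b \<xi> x0 N t w = x0 + inverse (sqrt (real N)) *\<^sub>R
     (\<Sum>k\<in>{0..kNt N t}.
        \<sigma> (XN \<sigma> b \<xi> x0 N (nk N k) w)
          *v (\<Sum>l\<in>{nk N k<..min (nk N (Suc k)) (nat \<lfloor>real N * t\<rfloor>)}. \<xi> l w)
        + inverse (sqrt (real N)) *\<^sub>R
            ((real (min (nk N (Suc k)) (nat \<lfloor>real N * t\<rfloor>)) - real (nk N k))
              *\<^sub>R b (XN \<sigma> b \<xi> x0 N (nk N k) w)))"

end

theory Submission
  imports Defs
begin

text \<open>
  On the grid, \<open>X_N - Xhat_N = N^(-1/2) M + N^(-1) B\<close>, where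
  \<open>M_n = \<Sum>_{j<n} (\<sigma>(X_j) - \<sigma>(X_{\<kappa> j})) \<xi>_{j+1}\<close> and \<open>B_n = \<Sum>_{j<n} (b(X_j) - b(X_{\<kappa> j}))\<close>,
  \<open>\<kappa> j\<close> being the first grid index of the block containing \<open>j\<close>. The scheme moves by at most
  \<open>2 L^2 N^(-1/2)\<close> per step and blocks have length \<open>[N^(1/4)]\<close>, so within a block
  \<open>|X_j - X_{\<kappa> j}| \<le> \<delta> = O(L^2 N^(-1/4))\<close>; this bounds \<open>B\<close> pathwise and the increments of
  \<open>M\<close> by \<open>L^2 \<delta>\<close>. The maximum of \<open>M\<close> is handled by the pathwise Doob inequality
  \<open>(max_{k\<le>n} |M_k|)^2 \<le> \<Sum>_{j<n} 4 |\<Delta>M_j|^2 + \<langle>H_j, \<Delta>M_j\<rangle>\<close>, with \<open>H_j\<close> a function of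
  \<open>\<xi>_1, ..., \<xi>_j\<close> only; by independence and \<open>E \<xi> = 0\<close> the last terms have mean zero.
  What remains is \<open>(8 L^4 + 2 L^2) \<delta>^2 \<le> 40 L^8 N^(-1/2)\<close>.
  To make all bounds hold on every path, the noise is truncated to \<open>|\<xi>| \<le> L\<close>, which changes
  nothing almost surely.
\<close>

lemma norm_matrix_vector_mult_le:
  fixes A :: "real^'n^'m"
  shows "norm (A *v x) \<le> norm A * norm x"
proof -
  have row: "\<bar>(A *v x) $ i\<bar> \<le> norm (A $ i) * norm x" for i
  proof -
    have "(A *v x) $ i = inner (A $ i) x"
      by (simp add: matrix_vector_mult_def inner_vec_def)
    thus ?thesis using Cauchy_Schwarz_ineq2 by simp
  qed
  have "norm (A *v x) = L2_set (\<lambda>i. \<bar>(A *v x) $ i\<bar>) UNIV" by (simp add: norm_vec_def)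
  also have "\<dots> \<le> L2_set (\<lambda>i. norm (A $ i) * norm x) UNIV"
    by (rule L2_set_mono) (use row in auto)
  also have "\<dots> = norm x * L2_set (\<lambda>i. norm (A $ i)) UNIV"
    by (subst L2_set_right_distrib) (simp_all add: mult.commute)
  also have "\<dots> = norm A * norm x"
    by (simp add: norm_vec_def[of A])
  finally show ?thesis .
qed

lemma norm_vector_matrix_mult_le:
  fixes A :: "real^'n^'m"
  shows "norm (x v* A) \<le> norm x * norm A"
proof -
  have "(norm (x v* A))\<^sup>2 = inner x (A *v (x v* A))"
    by (simp add: power2_norm_eq_inner dot_lmul_matrix)
  also have "\<dots> \<le> norm x * (norm A * norm (x v* A))"
    by (rule order_trans[OF Cauchy_Schwarz_ineq2[THEN abs_le_D1] mult_left_mono])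
       (simp_all add: norm_matrix_vector_mult_le)
  finally have "norm (x v* A) * norm (x v* A) \<le> (norm x * norm A) * norm (x v* A)"
    by (simp add: power2_eq_square algebra_simps)
  thus ?thesis
    by (cases "norm (x v* A) = 0") (auto simp: mult_le_cancel_right)
qed

lemma borel_measurable_matrix_vector_mult[measurable (raw)]:
  fixes f :: "'a \<Rightarrow> real^'n^'m" and g :: "'a \<Rightarrow> real^'n"
  assumes "f \<in> borel_measurable S" "g \<in> borel_measurable S"
  shows "(\<lambda>x. f x *v g x) \<in> borel_measurable S"
  using assms by (rule borel_measurable_continuous_Pair)
    (unfold matrix_vector_mult_def, intro continuous_intros continuous_on_vec_lambda)

lemma borel_measurable_vector_matrix_mult[measurable (raw)]:
  fixes f :: "'a \<Rightarrow> real^'m" and g :: "'a \<Rightarrow> real^'n^'m"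
  assumes "f \<in> borel_measurable S" "g \<in> borel_measurable S"
  shows "(\<lambda>x. f x v* g x) \<in> borel_measurable S"
  using assms by (rule borel_measurable_continuous_Pair)
    (unfold vector_matrix_mult_def, intro continuous_intros continuous_on_vec_lambda)

lemma borel_measurable_vec_nth[measurable (raw)]:
  fixes f :: "'a \<Rightarrow> real^'m"
  shows "f \<in> borel_measurable S \<Longrightarrow> (\<lambda>x. f x $ k) \<in> borel_measurable S"
  by (erule measurable_compose, rule borel_measurable_nth)

lemma borel_measurable_lipschitz:
  fixes f :: "'a::metric_space \<Rightarrow> 'b::metric_space"
  assumes "\<And>x y. dist (f x) (f y) \<le> C * dist x y"
  shows "f \<in> borel_measurable borel"
proof -
  have "(max C 0)-lipschitz_on UNIV f"
    by (intro lipschitz_onI order_trans[OF assms mult_right_mono]) auto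
  thus ?thesis by (intro borel_measurable_continuous_onI lipschitz_on_continuous_on)
qed

definition running_max :: "(nat \<Rightarrow> 'v::real_normed_vector) \<Rightarrow> nat \<Rightarrow> real" where
  "running_max M n = Max ((\<lambda>k. norm (M k)) ` {..n})"

lemma running_max_0[simp]: "running_max M 0 = norm (M 0)"
  by (simp add: running_max_def)

lemma running_max_Suc: "running_max M (Suc n) = max (running_max M n) (norm (M (Suc n)))"
  unfolding running_max_def by (simp add: atMost_Suc max.commute)

lemma norm_le_running_max: "k \<le> n \<Longrightarrow> norm (M k) \<le> running_max M n"
  unfolding running_max_def by (intro Max_ge) auto

lemma running_max_nonneg: "0 \<le> running_max M n"
  using norm_le_running_max[of 0 n M] norm_ge_zero[of "M 0"] by linarith

lemma running_max_le: "(\<And>k. k \<le> n \<Longrightarrow> norm (M k) \<le> c) \<Longrightarrow> running_max M n \<le> c"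
  unfolding running_max_def by (intro Max.boundedI) auto

lemma running_max_cong: "(\<And>k. k \<le> n \<Longrightarrow> M k = M' k) \<Longrightarrow> running_max M n = running_max M' n"
  unfolding running_max_def by (intro arg_cong[where f=Max] image_cong) auto

lemma borel_measurable_running_max[measurable (raw)]:
  "(\<And>k. (\<lambda>x. M x k) \<in> borel_measurable S) \<Longrightarrow> (\<lambda>x. running_max (M x) n) \<in> borel_measurable S"
  by (induction n) (simp_all add: running_max_Suc)

lemma inner_sgn_self: fixes x :: "'v::real_inner" shows "inner (sgn x) x = norm x"
  by (cases "x = 0") (simp_all add: sgn_div_norm power2_norm_eq_inner[symmetric] power2_eq_square)

lemma inner_sgn_le_norm: fixes x :: "'v::real_inner" shows "inner (sgn x) y \<le> norm y"
  by (rule order_trans[OF Cauchy_Schwarz_ineq2[THEN abs_le_D1]]) (cases "x = 0"; simp add: norm_sgn)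

lemma sum_running_max_increments_le:
  fixes M :: "nat \<Rightarrow> 'v::real_inner"
  assumes "M 0 = 0"
  shows "(\<Sum>j<n. running_max M j * inner (sgn (M j)) (M (Suc j) - M j))
           \<le> norm (M n) * running_max M n - (running_max M n)\<^sup>2 / 2"
proof (induction n)
  case 0 thus ?case using assms by simp
next
  case (Suc n)
  let ?m = "running_max M n" and ?a = "norm (M (Suc n))"
  have "(\<Sum>j<Suc n. running_max M j * inner (sgn (M j)) (M (Suc j) - M j))
      \<le> norm (M n) * ?m - ?m\<^sup>2/2 + ?m * inner (sgn (M n)) (M (Suc n) - M n)"
    using Suc by simp
  also have "\<dots> = ?m * inner (sgn (M n)) (M (Suc n)) - ?m\<^sup>2/2"
    by (simp add: inner_diff_right inner_sgn_self algebra_simps)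
  also have "\<dots> \<le> ?m * ?a - ?m\<^sup>2/2"
    using inner_sgn_le_norm[of "M n" "M (Suc n)"] running_max_nonneg[of M n]
    by (simp add: mult_left_mono)
  also have "\<dots> \<le> ?a * max ?m ?a - (max ?m ?a)\<^sup>2/2"
  proof (cases "?a \<le> ?m")
    case True thus ?thesis by (simp add: max_def mult.commute)
  next
    case False
    have "0 \<le> (?a - ?m)\<^sup>2/2" by simp
    thus ?thesis using False by (simp add: max_def power2_eq_square algebra_simps)
  qed
  finally show ?case by (simp add: running_max_Suc)
qed

lemma norm_sq_eq_sum_increments:
  fixes M :: "nat \<Rightarrow> 'v::real_inner"
  assumes "M 0 = 0"
  shows "(norm (M n))\<^sup>2 = (\<Sum>j<n. 2 * inner (M j) (M (Suc j) - M j) + (norm (M (Suc j) - M j))\<^sup>2)"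
proof (induction n)
  case 0 thus ?case using assms by simp
next
  case (Suc n)
  have "(norm (M (Suc n)))\<^sup>2 = (norm (M n + (M (Suc n) - M n)))\<^sup>2" by simp
  also have "\<dots> = (norm (M n))\<^sup>2 + 2 * inner (M n) (M (Suc n) - M n) + (norm (M (Suc n) - M n))\<^sup>2"
    by (simp add: power2_norm_eq_inner inner_diff_left inner_diff_right inner_add_left
        inner_add_right inner_commute algebra_simps)
  finally show ?case using Suc by simp
qed

text \<open>Pathwise Doob inequality: the weight of the increment \<open>M (Suc j) - M j\<close> depends only on
  \<open>M 0, ..., M j\<close>, so for a martingale the last sum has mean zero.\<close>
lemma pathwise_doob:
  fixes M :: "nat \<Rightarrow> 'v::real_inner"
  assumes "M 0 = 0"
  shows "(running_max M n)\<^sup>2 \<le> (\<Sum>j<n. 4 * (norm (M (Suc j) - M j))\<^sup>2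
            + inner (8 *\<^sub>R M j - (4 * running_max M j) *\<^sub>R sgn (M j)) (M (Suc j) - M j))"
proof -
  let ?S = "\<Sum>j<n. running_max M j * inner (sgn (M j)) (M (Suc j) - M j)"
  let ?m = "running_max M n" and ?a = "norm (M n)"
  have "?S \<le> ?a * ?m - ?m\<^sup>2/2" by (rule sum_running_max_increments_le[of M n, OF assms])
  moreover have "0 \<le> (2 * ?a - ?m)\<^sup>2" by simp
  ultimately have "?m\<^sup>2 \<le> 4 * ?a\<^sup>2 - 4 * ?S"
    by (simp add: power2_eq_square algebra_simps)
  also have "\<dots> = (\<Sum>j<n. 4 * (norm (M (Suc j) - M j))\<^sup>2
            + inner (8 *\<^sub>R M j - (4 * running_max M j) *\<^sub>R sgn (M j)) (M (Suc j) - M j))"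
    unfolding norm_sq_eq_sum_increments[of M n, OF assms]
    by (simp add: sum_distrib_left sum_subtractf[symmetric] sum.distrib[symmetric]
        inner_diff_left algebra_simps)
  finally show ?thesis .
qed

lemma (in prob_space) indep_vars_integral_past_mult_next:
  fixes \<xi> :: "nat \<Rightarrow> 'a \<Rightarrow> 'b::topological_space"
    and F :: "(nat \<Rightarrow> 'b) \<Rightarrow> real" and G :: "'b \<Rightarrow> real"
  assumes ind: "indep_vars (\<lambda>_. borel) \<xi> {1..}"
    and F: "F \<in> borel_measurable (PiM {1..j} (\<lambda>_. borel))" and F_bounded: "\<And>f. \<bar>F f\<bar> \<le> C"
    and G: "G \<in> borel_measurable borel" and G_bounded: "\<And>v. \<bar>G v\<bar> \<le> C'"
  shows "integrable M (\<lambda>w. F (restrict (\<lambda>l. \<xi> l w) {1..j}) * G (\<xi> (Suc j) w))"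
    and "(\<integral>w. F (restrict (\<lambda>l. \<xi> l w) {1..j}) * G (\<xi> (Suc j) w) \<partial>M)
          = (\<integral>w. F (restrict (\<lambda>l. \<xi> l w) {1..j}) \<partial>M) * (\<integral>w. G (\<xi> (Suc j) w) \<partial>M)"
proof -
  have \<xi>_meas: "\<xi> l \<in> borel_measurable M" if "l \<ge> 1" for l
    using ind that unfolding indep_vars_def by auto
  have "indep_var (PiM {1..j} (\<lambda>_. borel)) (\<lambda>w. restrict (\<lambda>l. \<xi> l w) {1..j})
                  (PiM {Suc j} (\<lambda>_. borel)) (\<lambda>w. restrict (\<lambda>l. \<xi> l w) {Suc j})"
    by (rule indep_var_restrict[OF ind]) auto
  moreover have "(\<lambda>g. G (g (Suc j))) \<in> borel_measurable (PiM {Suc j} (\<lambda>_. borel))"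
    using measurable_compose[OF measurable_component_singleton[of "Suc j" "{Suc j}"] G] by simp
  ultimately have "indep_var borel (F \<circ> (\<lambda>w. restrict (\<lambda>l. \<xi> l w) {1..j}))
                    borel ((\<lambda>g. G (g (Suc j))) \<circ> (\<lambda>w. restrict (\<lambda>l. \<xi> l w) {Suc j}))"
    by (rule indep_var_compose[OF _ F])
  hence indep: "indep_var borel (\<lambda>w. F (restrict (\<lambda>l. \<xi> l w) {1..j})) borel (\<lambda>w. G (\<xi> (Suc j) w))"
    by (simp add: comp_def)
  have "(\<lambda>w. restrict (\<lambda>l. \<xi> l w) {1..j}) \<in> measurable M (PiM {1..j} (\<lambda>_. borel))"
    by (rule measurable_restrict) (use \<xi>_meas in auto)
  hence F_int: "integrable M (\<lambda>w. F (restrict (\<lambda>l. \<xi> l w) {1..j}))"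
    by (intro integrable_const_bound[where B=C]) (use F_bounded measurable_compose[OF _ F] in auto)
  have G_int: "integrable M (\<lambda>w. G (\<xi> (Suc j) w))"
    by (rule integrable_const_bound[where B=C']) (use G_bounded measurable_compose[OF \<xi>_meas G] in auto)
  show "integrable M (\<lambda>w. F (restrict (\<lambda>l. \<xi> l w) {1..j}) * G (\<xi> (Suc j) w))"
    by (rule indep_var_integrable[OF indep F_int G_int])
  show "(\<integral>w. F (restrict (\<lambda>l. \<xi> l w) {1..j}) * G (\<xi> (Suc j) w) \<partial>M)
          = (\<integral>w. F (restrict (\<lambda>l. \<xi> l w) {1..j}) \<partial>M) * (\<integral>w. G (\<xi> (Suc j) w) \<partial>M)"
    by (rule indep_var_lebesgue_integral[OF indep F_int G_int])
qed

lemma (in prob_space) indep_vars_integral_inner_past_next_eq_0: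
  fixes \<xi> :: "nat \<Rightarrow> 'a \<Rightarrow> 'b::topological_space"
    and F :: "(nat \<Rightarrow> 'b) \<Rightarrow> real^'d" and G :: "'b \<Rightarrow> real^'d"
  assumes ind: "indep_vars (\<lambda>_. borel) \<xi> {1..}"
    and F: "F \<in> borel_measurable (PiM {1..j} (\<lambda>_. borel))" and F_bounded: "\<And>f. norm (F f) \<le> C"
    and G: "G \<in> borel_measurable borel" and G_bounded: "\<And>v. norm (G v) \<le> C'"
    and G_mean: "\<And>i. (\<integral>w. G (\<xi> (Suc j) w) $ i \<partial>M) = 0"
  shows "integrable M (\<lambda>w. inner (F (restrict (\<lambda>l. \<xi> l w) {1..j})) (G (\<xi> (Suc j) w)))"
    and "(\<integral>w. inner (F (restrict (\<lambda>l. \<xi> l w) {1..j})) (G (\<xi> (Suc j) w)) \<partial>M) = 0"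
proof -
  note component = indep_vars_integral_past_mult_next[OF ind,
      where F="\<lambda>f. F f $ i" and C=C and G="\<lambda>v. G v $ i" and C'=C' for i]
  have bounds: "\<bar>F f $ i\<bar> \<le> C" "\<bar>G v $ i\<bar> \<le> C'" for f v i
    using component_le_norm_cart F_bounded G_bounded by (blast intro: order_trans)+
  have F_i: "(\<lambda>f. F f $ i) \<in> borel_measurable (PiM {1..j} (\<lambda>_. borel))" for i
    using F by measurable
  have G_i: "(\<lambda>v. G v $ i) \<in> borel_measurable borel" for i
    using G by measurable
  have inner_eq: "inner (F f) (G v) = (\<Sum>i\<in>UNIV. F f $ i * G v $ i)" for f v
    by (simp add: inner_vec_def)
  show "integrable M (\<lambda>w. inner (F (restrict (\<lambda>l. \<xi> l w) {1..j})) (G (\<xi> (Suc j) w)))"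
    unfolding inner_eq using component(1)[OF F_i bounds(1) G_i bounds(2)] by simp
  show "(\<integral>w. inner (F (restrict (\<lambda>l. \<xi> l w) {1..j})) (G (\<xi> (Suc j) w)) \<partial>M) = 0"
    unfolding inner_eq using component[OF F_i bounds(1) G_i bounds(2)]
    by (simp add: Bochner_Integration.integral_sum G_mean)
qed

lemma XN_cong:
  assumes "\<And>l. l \<in> {1..n} \<Longrightarrow> \<xi> l w = \<xi>' l w'"
  shows "XN \<sigma> b \<xi> x0 N n w = XN \<sigma> b \<xi>' x0 N n w'"
  using assms by (induction n) auto

lemma XN_measurable:
  assumes "\<sigma> \<in> borel_measurable borel" "b \<in> borel_measurable borel"
    and "\<And>l. l \<ge> 1 \<Longrightarrow> \<xi> l \<in> borel_measurable S"
  shows "(\<lambda>w. XN \<sigma> b \<xi> x0 N n w) \<in> borel_measurable S"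
proof (induction n)
  case (Suc n)
  have "(\<lambda>w. \<sigma> (XN \<sigma> b \<xi> x0 N n w)) \<in> borel_measurable S"
    and "(\<lambda>w. b (XN \<sigma> b \<xi> x0 N n w)) \<in> borel_measurable S"
    using measurable_compose[OF Suc] assms(1,2) by auto
  then show ?case using Suc assms(3)[of "Suc n"] by simp
qed simp

lemma XN_eq_sum:
  "XN \<sigma> b \<xi> x0 N n w = x0 + (\<Sum>j<n. inverse (sqrt (real N)) *\<^sub>R (\<sigma> (XN \<sigma> b \<xi> x0 N j w) *v \<xi> (Suc j) w)
      + inverse (real N) *\<^sub>R b (XN \<sigma> b \<xi> x0 N j w))"
  by (induction n) (simp_all add: algebra_simps)

lemma one_le_blk: "N \<ge> 1 \<Longrightarrow> blk N \<ge> 1"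
  unfolding blk_def by (simp add: le_nat_floor)

lemma blk_sq_le_sqrt: "(real (blk N))\<^sup>2 \<le> sqrt (real N)"
proof -
  have "real (blk N) \<le> root 4 (real N)" unfolding blk_def by simp
  hence "(real (blk N))\<^sup>2 \<le> (root 4 (real N))\<^sup>2" by (intro power_mono) auto
  also have "(root 4 (real N))\<^sup>2 = root 4 ((real N)\<^sup>2)"
    by (simp add: real_root_power)
  also have "\<dots> = sqrt (real N)"
    using real_root_mult_exp[of 2 2 "(real N)\<^sup>2"] real_root_power_cancel[of 2 "real N"]
    by (simp add: sqrt_def)
  finally show ?thesis .
qed

lemma kNt_eq_div:
  assumes "N \<ge> 1" "0 \<le> t"
  shows "kNt N t = nat \<lfloor>real N * t\<rfloor> div blk N"
proof -
  let ?B = "blk N" and ?n = "nat \<lfloor>real N * t\<rfloor>"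
  have B: "?B \<ge> 1" using one_le_blk assms by simp
  have "real (k * ?B) \<le> real N * t \<longleftrightarrow> k * ?B \<le> ?n" for k
  proof -
    have "0 \<le> real N * t" using assms by simp
    thus ?thesis by linarith
  qed
  hence eq: "{k. real (nk N k) \<le> real N * t} = {k. k * ?B \<le> ?n}"
    by (auto simp: nk_def)
  show ?thesis unfolding kNt_def eq
  proof (rule Max_eqI)
    have kB: "k \<le> k * ?B" for k using B by simp
    show "finite {k. k * ?B \<le> ?n}"
      by (rule finite_subset[of _ "{..?n}"]) (auto intro: le_trans[OF kB])
    show "y \<le> ?n div ?B" if "y \<in> {k. k * ?B \<le> ?n}" for y
      using that B by (simp add: less_eq_div_iff_mult_less_eq)
    show "?n div ?B \<in> {k. k * ?B \<le> ?n}" by (simp add: div_times_less_eq_dividend)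
  qed
qed

lemma div_eq_iff_le_mult_less:
  fixes m B :: nat
  assumes "0 < B"
  shows "m div B = k \<longleftrightarrow> k * B \<le> m \<and> m < Suc k * B"
  using assms by (meson div_less_iff_less_mult div_times_less_eq_dividend le_less_Suc_eq
      less_eq_div_iff_mult_less_eq)

lemma sum_blocks_eq_sum:
  fixes g :: "nat \<Rightarrow> nat \<Rightarrow> 'v::comm_monoid_add"
  assumes "B \<ge> 1"
  shows "(\<Sum>k\<in>{0..n div B}. \<Sum>l\<in>{k*B<..min (Suc k * B) n}. g k l) = (\<Sum>j<n. g (j div B) (Suc j))"
proof -
  have block: "{l \<in> {1..n}. (l - 1) div B = k} = {k*B<..min (Suc k * B) n}" for k
    using assms by (auto simp: div_eq_iff_le_mult_less)
  have "(\<Sum>j<n. g (j div B) (Suc j)) = (\<Sum>l\<in>{1..n}. g ((l - 1) div B) l)"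
    by (rule sum.reindex_bij_witness[where i="\<lambda>l. l - 1" and j=Suc]) auto
  also have "\<dots> = (\<Sum>k\<in>{0..n div B}. \<Sum>l\<in>{l \<in> {1..n}. (l - 1) div B = k}. g ((l - 1) div B) l)"
    by (rule sum.group[symmetric]) (auto intro!: div_le_mono)
  also have "\<dots> = (\<Sum>k\<in>{0..n div B}. \<Sum>l\<in>{k*B<..min (Suc k * B) n}. g k l)"
    unfolding block
  proof (intro sum.cong refl)
    fix k l assume "l \<in> {k*B<..min (Suc k * B) n}"
    hence "(l - 1) div B = k" using block by blast
    thus "g ((l - 1) div B) l = g k l" by simp
  qed
  finally show ?thesis by simp
qed

lemma Xhat_eq_sum:
  assumes "N \<ge> 1" "0 \<le> t"
  shows "Xhat \<sigma> b \<xi> x0 N t w = x0 + inverse (sqrt (real N)) *\<^sub>R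
    (\<Sum>j<nat \<lfloor>real N * t\<rfloor>. \<sigma> (XN \<sigma> b \<xi> x0 N (j div blk N * blk N) w) *v \<xi> (Suc j) w
       + inverse (sqrt (real N)) *\<^sub>R b (XN \<sigma> b \<xi> x0 N (j div blk N * blk N) w))"
proof -
  let ?B = "blk N" and ?n = "nat \<lfloor>real N * t\<rfloor>" and ?s = "inverse (sqrt (real N))"
  define g where "g k l = \<sigma> (XN \<sigma> b \<xi> x0 N (k * ?B) w) *v \<xi> l w
    + ?s *\<^sub>R b (XN \<sigma> b \<xi> x0 N (k * ?B) w)" for k l
  have "(\<Sum>k\<in>{0..kNt N t}.
        \<sigma> (XN \<sigma> b \<xi> x0 N (nk N k) w) *v (\<Sum>l\<in>{nk N k<..min (nk N (Suc k)) ?n}. \<xi> l w)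
        + ?s *\<^sub>R ((real (min (nk N (Suc k)) ?n) - real (nk N k)) *\<^sub>R b (XN \<sigma> b \<xi> x0 N (nk N k) w)))
      = (\<Sum>k\<in>{0..?n div ?B}. \<Sum>l\<in>{k*?B<..min (Suc k * ?B) ?n}. g k l)"
    unfolding kNt_eq_div[OF assms]
  proof (rule sum.cong[OF refl])
    fix k assume "k \<in> {0..?n div ?B}"
    hence "k * ?B \<le> ?n div ?B * ?B" by simp
    also have "\<dots> \<le> ?n" by (rule div_times_less_eq_dividend)
    finally have card: "real (min (Suc k * ?B) ?n) - real (k * ?B)
        = real (card {k*?B<..min (Suc k * ?B) ?n})"
      by simp
    show "\<sigma> (XN \<sigma> b \<xi> x0 N (nk N k) w) *v (\<Sum>l\<in>{nk N k<..min (nk N (Suc k)) ?n}. \<xi> l w)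
        + ?s *\<^sub>R ((real (min (nk N (Suc k)) ?n) - real (nk N k)) *\<^sub>R b (XN \<sigma> b \<xi> x0 N (nk N k) w))
        = (\<Sum>l\<in>{k*?B<..min (Suc k * ?B) ?n}. g k l)"
      unfolding g_def nk_def sum.distrib linear_sum[OF matrix_vector_mul_linear]
        sum_constant_scaleR card by (simp add: o_def)
  qed
  also have "\<dots> = (\<Sum>j<?n. g (j div ?B) (Suc j))"
    by (rule sum_blocks_eq_sum) (use one_le_blk assms in auto)
  finally show ?thesis unfolding Xhat_def g_def by simp
qed

locale euler_scheme =
  fixes \<sigma> :: "real^'d \<Rightarrow> real^'d^'d" and b :: "real^'d \<Rightarrow> real^'d" and L :: real
    and x0 :: "real^'d" and N :: nat
  assumes one_le_L: "L \<ge> 1"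
    and \<sigma>_bounded: "\<And>x. norm (\<sigma> x) \<le> L" and b_bounded: "\<And>x. norm (b x) \<le> L"
    and \<sigma>_lipschitz: "\<And>x y. norm (\<sigma> x - \<sigma> y) \<le> L * norm (x - y)"
    and b_lipschitz: "\<And>x y. norm (b x - b y) \<le> L * norm (x - y)"
    and one_le_N: "N \<ge> 1"
begin

definition s :: real where
  "s = inverse (sqrt (real N))"

definition trunc_noise :: "real^'d \<Rightarrow> real^'d" where
  "trunc_noise v = (if norm v \<le> L then v else 0)"

text \<open>The scheme driven by a fixed noise sequence \<open>f\<close>, which also serves as the sample point of \<open>XN\<close>.\<close>
definition Xtr :: "(nat \<Rightarrow> real^'d) \<Rightarrow> nat \<Rightarrow> real^'d" where
  "Xtr f n = XN \<sigma> b (\<lambda>l f. trunc_noise (f l)) x0 N n f"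

definition block_start :: "nat \<Rightarrow> nat" where
  "block_start j = j div blk N * blk N"

definition \<sigma>_gap :: "(nat \<Rightarrow> real^'d) \<Rightarrow> nat \<Rightarrow> real^'d^'d" where
  "\<sigma>_gap f j = \<sigma> (Xtr f j) - \<sigma> (Xtr f (block_start j))"

definition mart_incr :: "(nat \<Rightarrow> real^'d) \<Rightarrow> nat \<Rightarrow> real^'d" where
  "mart_incr f j = \<sigma>_gap f j *v trunc_noise (f (Suc j))"

definition mart :: "(nat \<Rightarrow> real^'d) \<Rightarrow> nat \<Rightarrow> real^'d" where
  "mart f n = (\<Sum>j<n. mart_incr f j)"

definition doob_weight :: "(nat \<Rightarrow> real^'d) \<Rightarrow> nat \<Rightarrow> real^'d" where
  "doob_weight f j = 8 *\<^sub>R mart f j - (4 * running_max (mart f) j) *\<^sub>R sgn (mart f j)"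

definition drift_gap :: "(nat \<Rightarrow> real^'d) \<Rightarrow> nat \<Rightarrow> real^'d" where
  "drift_gap f n = (\<Sum>j<n. b (Xtr f j) - b (Xtr f (block_start j)))"

definition \<delta> :: real where
  "\<delta> = 2 * real (blk N) * s * L\<^sup>2"

definition error_const :: real where
  "error_const = 2 * s\<^sup>2 * (4 * real N * (L * \<delta> * L)\<^sup>2) + 2 * s ^ 4 * (real N * (L * \<delta>))\<^sup>2"

definition error_bound :: "(nat \<Rightarrow> real^'d) \<Rightarrow> real" where
  "error_bound f = error_const + 2 * s\<^sup>2 * (\<Sum>j<N. inner (doob_weight f j) (mart_incr f j))"

lemma s_pos: "0 < s" and s_le_1: "s \<le> 1" and s_sq: "s\<^sup>2 = inverse (real N)"
  and s_sq_mult_N: "s\<^sup>2 * real N = 1" and s_mult_sqrt_N: "s * sqrt (real N) = 1"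
proof -
  have "1 \<le> sqrt (real N)" using one_le_N by simp
  thus "0 < s" "s \<le> 1" unfolding s_def by (auto intro: inverse_le_1_iff[THEN iffD2])
  show "s\<^sup>2 = inverse (real N)" "s\<^sup>2 * real N = 1" "s * sqrt (real N) = 1"
    using one_le_N by (auto simp: s_def power_inverse)
qed

lemma \<delta>_nonneg: "0 \<le> \<delta>"
  unfolding \<delta>_def using s_pos by simp

lemma block_start_le: "block_start j \<le> j"
  unfolding block_start_def by (rule div_times_less_eq_dividend)

lemma diff_block_start_less: "j - block_start j < blk N"
  using one_le_blk[OF one_le_N] by (simp add: block_start_def minus_div_mult_eq_mod)

lemma norm_trunc_noise_le: "norm (trunc_noise v) \<le> L"
  using one_le_L by (simp add: trunc_noise_def)

lemma trunc_noise_measurable[measurable]: "trunc_noise \<in> borel_measurable borel"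
  unfolding trunc_noise_def by measurable

lemma \<sigma>_measurable: "\<sigma> \<in> borel_measurable borel"
  using \<sigma>_lipschitz by (intro borel_measurable_lipschitz) (simp add: dist_norm)

lemma b_measurable: "b \<in> borel_measurable borel"
  using b_lipschitz by (intro borel_measurable_lipschitz) (simp add: dist_norm)

lemma Xtr_cong: "(\<And>l. l \<in> {1..n} \<Longrightarrow> f l = g l) \<Longrightarrow> Xtr f n = Xtr g n"
  unfolding Xtr_def by (rule XN_cong) auto

lemma \<sigma>_gap_cong: "(\<And>l. l \<in> {1..j} \<Longrightarrow> f l = g l) \<Longrightarrow> \<sigma>_gap f j = \<sigma>_gap g j"
  unfolding \<sigma>_gap_def using block_start_le[of j]
  by (intro arg_cong2[where f=minus] arg_cong[where f=\<sigma>] Xtr_cong) auto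

lemma mart_cong:
  assumes "\<And>l. l \<in> {1..n} \<Longrightarrow> f l = g l"
  shows "mart f n = mart g n"
proof -
  have "mart_incr f j = mart_incr g j" if "j < n" for j
    unfolding mart_incr_def using that assms[of "Suc j"] \<sigma>_gap_cong[of j f g] assms by simp
  thus ?thesis unfolding mart_def by (intro sum.cong) auto
qed

lemma doob_weight_cong:
  assumes "\<And>l. l \<in> {1..j} \<Longrightarrow> f l = g l"
  shows "doob_weight f j = doob_weight g j"
proof -
  have "mart f k = mart g k" if "k \<le> j" for k
    using that by (intro mart_cong assms) auto
  thus ?thesis
    unfolding doob_weight_def using running_max_cong[of j "mart f" "mart g"] by simp
qed

context
  fixes S :: "'b measure" and H :: "'b \<Rightarrow> nat \<Rightarrow> real^'d"
  assumes H_measurable: "\<And>l. l \<ge> 1 \<Longrightarrow> (\<lambda>x. H x l) \<in> borel_measurable S"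
begin

lemma Xtr_measurable[measurable]: "(\<lambda>x. Xtr (H x) n) \<in> borel_measurable S"
proof -
  have "(\<lambda>x. XN \<sigma> b (\<lambda>l x. trunc_noise (H x l)) x0 N n x) \<in> borel_measurable S"
    using \<sigma>_measurable b_measurable by (rule XN_measurable) (use H_measurable in measurable)
  moreover have "Xtr (H x) n = XN \<sigma> b (\<lambda>l x. trunc_noise (H x l)) x0 N n x" for x
    unfolding Xtr_def by (rule XN_cong) simp
  ultimately show ?thesis by simp
qed

lemma \<sigma>_gap_measurable[measurable]: "(\<lambda>x. \<sigma>_gap (H x) j) \<in> borel_measurable S"
  unfolding \<sigma>_gap_def using \<sigma>_measurable by measurable

lemma mart_incr_measurable[measurable]: "(\<lambda>x. mart_incr (H x) j) \<in> borel_measurable S"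
  unfolding mart_incr_def using H_measurable[of "Suc j"] by measurable

lemma doob_weight_measurable[measurable]: "(\<lambda>x. doob_weight (H x) j) \<in> borel_measurable S"
  unfolding doob_weight_def mart_def by measurable

end

lemma norm_Xtr_diff_le:
  "m \<le> j \<Longrightarrow> norm (Xtr f j - Xtr f m) \<le> real (j - m) * (s * L * L + s\<^sup>2 * L)"
proof (induction j rule: dec_induct)
  case (step j)
  let ?v = "s *\<^sub>R (\<sigma> (Xtr f j) *v trunc_noise (f (Suc j)))" and ?w = "s\<^sup>2 *\<^sub>R b (Xtr f j)"
  have step_eq: "Xtr f (Suc j) - Xtr f m = (Xtr f j - Xtr f m) + (?v + ?w)"
    unfolding Xtr_def s_sq by (simp add: s_def algebra_simps)
  have "norm (Xtr f (Suc j) - Xtr f m) \<le> norm (Xtr f j - Xtr f m) + (norm ?v + norm ?w)"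
    unfolding step_eq by (rule order_trans[OF norm_triangle_ineq add_left_mono[OF norm_triangle_ineq]])
  also have "\<dots> \<le> real (j - m) * (s * L * L + s\<^sup>2 * L) + (s * L * L + s\<^sup>2 * L)"
  proof (intro add_mono step.IH)
    have "norm (\<sigma> (Xtr f j) *v trunc_noise (f (Suc j))) \<le> L * L"
      using \<sigma>_bounded norm_trunc_noise_le one_le_L
      by (intro order_trans[OF norm_matrix_vector_mult_le mult_mono]) auto
    thus "norm ?v \<le> s * L * L" using s_pos by (simp add: mult.assoc mult_left_mono)
    show "norm ?w \<le> s\<^sup>2 * L" using b_bounded[of "Xtr f j"] by (simp add: mult_left_mono)
  qed
  also have "\<dots> = real (Suc j - m) * (s * L * L + s\<^sup>2 * L)"
    using step by (simp add: Suc_diff_le algebra_simps)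
  finally show ?case .
qed simp

lemma norm_Xtr_diff_block_start_le: "norm (Xtr f j - Xtr f (block_start j)) \<le> \<delta>"
proof -
  have "norm (Xtr f j - Xtr f (block_start j)) \<le> real (j - block_start j) * (s * L * L + s\<^sup>2 * L)"
    by (rule norm_Xtr_diff_le[OF block_start_le])
  also have "\<dots> \<le> real (blk N) * (2 * s * L\<^sup>2)"
  proof (rule mult_mono)
    show "real (j - block_start j) \<le> real (blk N)" using diff_block_start_less[of j] by simp
    have "s\<^sup>2 * L \<le> s * L * L" using s_pos s_le_1 one_le_L
      by (simp add: power2_eq_square mult_mono)
    thus "s * L * L + s\<^sup>2 * L \<le> 2 * s * L\<^sup>2" by (simp add: power2_eq_square algebra_simps)
  qed (use s_pos one_le_L in auto)
  finally show ?thesis unfolding \<delta>_def by (simp add: mult.assoc)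
qed

lemma norm_\<sigma>_gap_le: "norm (\<sigma>_gap f j) \<le> L * \<delta>"
  unfolding \<sigma>_gap_def using one_le_L
  by (intro order_trans[OF \<sigma>_lipschitz mult_left_mono[OF norm_Xtr_diff_block_start_le]]) auto

lemma norm_mart_incr_le: "norm (mart_incr f j) \<le> L * \<delta> * L"
  unfolding mart_incr_def using norm_\<sigma>_gap_le norm_trunc_noise_le one_le_L \<delta>_nonneg
  by (intro order_trans[OF norm_matrix_vector_mult_le mult_mono]) auto

lemma norm_mart_le: "norm (mart f n) \<le> real n * (L * \<delta> * L)"
proof -
  have "norm (mart f n) \<le> (\<Sum>j<n. norm (mart_incr f j))" unfolding mart_def by (rule norm_sum)
  also have "\<dots> \<le> (\<Sum>j<n. L * \<delta> * L)" by (intro sum_mono norm_mart_incr_le)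
  finally show ?thesis by simp
qed

lemma running_max_mart_le: "running_max (mart f) n \<le> real n * (L * \<delta> * L)"
proof (rule running_max_le)
  fix k assume "k \<le> n"
  hence "real k * (L * \<delta> * L) \<le> real n * (L * \<delta> * L)"
    using one_le_L \<delta>_nonneg by (intro mult_right_mono) auto
  thus "norm (mart f k) \<le> real n * (L * \<delta> * L)" using norm_mart_le[of f k] by linarith
qed

lemma norm_doob_weight_le: "norm (doob_weight f j) \<le> 12 * real j * (L * \<delta> * L)"
proof -
  have "norm (doob_weight f j) \<le> 8 * norm (mart f j) + 4 * running_max (mart f) j"
    unfolding doob_weight_def using running_max_nonneg[of "mart f" j]
    by (intro order_trans[OF norm_triangle_ineq4]) (simp add: norm_sgn)
  thus ?thesis using norm_mart_le[of f j] running_max_mart_le[of f j] by simp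
qed

lemma norm_drift_gap_le: "norm (drift_gap f n) \<le> real n * (L * \<delta>)"
proof -
  have "norm (drift_gap f n) \<le> (\<Sum>j<n. norm (b (Xtr f j) - b (Xtr f (block_start j))))"
    unfolding drift_gap_def by (rule norm_sum)
  also have "\<dots> \<le> (\<Sum>j<n. L * \<delta>)"
    using one_le_L by (intro sum_mono order_trans[OF b_lipschitz
        mult_left_mono[OF norm_Xtr_diff_block_start_le]]) auto
  finally show ?thesis by simp
qed

lemma \<delta>_sq_le: "\<delta>\<^sup>2 \<le> 4 * s * L ^ 4"
proof -
  have "\<delta>\<^sup>2 = 4 * (real (blk N))\<^sup>2 * s\<^sup>2 * L ^ 4" unfolding \<delta>_def by (simp add: power_mult_distrib)
  also have "\<dots> \<le> 4 * sqrt (real N) * s\<^sup>2 * L ^ 4"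
    using blk_sq_le_sqrt[of N] s_pos by (intro mult_right_mono) auto
  also have "\<dots> = 4 * s * L ^ 4" using s_mult_sqrt_N by (simp add: power2_eq_square algebra_simps)
  finally show ?thesis .
qed

lemma XN_eq_Xtr:
  assumes "\<And>l. l \<ge> 1 \<Longrightarrow> norm (\<xi> l w) \<le> L"
  shows "XN \<sigma> b \<xi> x0 N k w = Xtr (\<lambda>l. \<xi> l w) k"
  unfolding Xtr_def by (rule XN_cong) (use assms in \<open>auto simp: trunc_noise_def\<close>)

lemma Xt_diff_Xhat_eq:
  assumes bounded: "\<And>l. l \<ge> 1 \<Longrightarrow> norm (\<xi> l w) \<le> L" and "0 \<le> t"
  shows "Xt \<sigma> b \<xi> x0 N t w - Xhat \<sigma> b \<xi> x0 N t w
    = s *\<^sub>R mart (\<lambda>l. \<xi> l w) (nat \<lfloor>real N * t\<rfloor>) + s\<^sup>2 *\<^sub>R drift_gap (\<lambda>l. \<xi> l w) (nat \<lfloor>real N * t\<rfloor>)"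
proof -
  let ?f = "\<lambda>l. \<xi> l w" and ?n = "nat \<lfloor>real N * t\<rfloor>"
  have X: "XN \<sigma> b \<xi> x0 N k w = Xtr ?f k" for k by (rule XN_eq_Xtr[of \<xi> w, OF bounded])
  have \<xi>: "trunc_noise (?f (Suc j)) = \<xi> (Suc j) w" for j
    using bounded[of "Suc j"] by (simp add: trunc_noise_def)
  let ?step = "\<lambda>k j. s *\<^sub>R (\<sigma> (Xtr ?f k) *v trunc_noise (?f (Suc j))) + s\<^sup>2 *\<^sub>R b (Xtr ?f k)"
  have "Xt \<sigma> b \<xi> x0 N t w = x0 + (\<Sum>j<?n. ?step j j)"
    unfolding Xt_def by (subst XN_eq_sum) (simp only: X \<xi> s_sq, simp add: s_def)
  moreover have "Xhat \<sigma> b \<xi> x0 N t w = x0 + (\<Sum>j<?n. ?step (block_start j) j)"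
    unfolding Xhat_eq_sum[OF one_le_N assms(2)] X \<xi> block_start_def s_def
    by (simp add: scaleR_sum_right scaleR_add_right power2_eq_square)
  ultimately have "Xt \<sigma> b \<xi> x0 N t w - Xhat \<sigma> b \<xi> x0 N t w
      = (\<Sum>j<?n. ?step j j - ?step (block_start j) j)"
    by (simp add: sum_subtractf)
  also have "\<dots> = (\<Sum>j<?n. s *\<^sub>R mart_incr ?f j + s\<^sup>2 *\<^sub>R (b (Xtr ?f j) - b (Xtr ?f (block_start j))))"
    unfolding mart_incr_def \<sigma>_gap_def matrix_vector_mult_diff_rdistrib scaleR_diff_right
    by (simp add: algebra_simps)
  also have "\<dots> = s *\<^sub>R mart ?f ?n + s\<^sup>2 *\<^sub>R drift_gap ?f ?n"
    unfolding mart_def drift_gap_def scaleR_sum_right sum.distrib ..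
  finally show ?thesis .
qed

lemma running_max_mart_sq_le:
  "(running_max (mart f) N)\<^sup>2 \<le> 4 * real N * (L * \<delta> * L)\<^sup>2 + (\<Sum>j<N. inner (doob_weight f j) (mart_incr f j))"
proof -
  have incr: "mart f (Suc j) - mart f j = mart_incr f j" for j by (simp add: mart_def)
  have "mart f 0 = 0" by (simp add: mart_def)
  hence "(running_max (mart f) N)\<^sup>2 \<le> (\<Sum>j<N. 4 * (norm (mart_incr f j))\<^sup>2 + inner (doob_weight f j) (mart_incr f j))"
    using pathwise_doob[of "mart f" N] unfolding incr doob_weight_def by blast
  also have "\<dots> \<le> (\<Sum>j<N. 4 * (L * \<delta> * L)\<^sup>2 + inner (doob_weight f j) (mart_incr f j))"
    by (intro sum_mono add_mono order_refl mult_left_mono power_mono norm_mart_incr_le) simp_all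
  finally show ?thesis by (simp add: sum.distrib)
qed

lemma norm_Xt_diff_Xhat_sq_le:
  assumes "\<And>l. l \<ge> 1 \<Longrightarrow> norm (\<xi> l w) \<le> L" and "0 \<le> t" "t \<le> 1"
  shows "(norm (Xt \<sigma> b \<xi> x0 N t w - Xhat \<sigma> b \<xi> x0 N t w))\<^sup>2 \<le> error_bound (\<lambda>l. \<xi> l w)"
proof -
  let ?f = "\<lambda>l. \<xi> l w" and ?n = "nat \<lfloor>real N * t\<rfloor>"
  let ?a = "norm (s *\<^sub>R mart ?f ?n)" and ?c = "norm (s\<^sup>2 *\<^sub>R drift_gap ?f ?n)"
  have "real N * t \<le> real N" using assms by (simp add: mult_left_le)
  hence n_le_N: "?n \<le> N" by linarith
  have "Xt \<sigma> b \<xi> x0 N t w - Xhat \<sigma> b \<xi> x0 N t w = s *\<^sub>R mart ?f ?n + s\<^sup>2 *\<^sub>R drift_gap ?f ?n"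
    using assms(1,2) by (rule Xt_diff_Xhat_eq)
  hence "(norm (Xt \<sigma> b \<xi> x0 N t w - Xhat \<sigma> b \<xi> x0 N t w))\<^sup>2 \<le> (?a + ?c)\<^sup>2"
    by (simp only:) (intro power_mono norm_triangle_ineq norm_ge_zero)
  also have "\<dots> \<le> 2 * ?a\<^sup>2 + 2 * ?c\<^sup>2"
    using sum_squares_bound[of ?a ?c] by (simp add: power2_eq_square algebra_simps)
  also have "\<dots> \<le> 2 * (s\<^sup>2 * (running_max (mart ?f) N)\<^sup>2) + 2 * (s ^ 4 * (real N * (L * \<delta>))\<^sup>2)"
  proof (intro add_mono mult_left_mono)
    have "norm (mart ?f ?n) \<le> running_max (mart ?f) N" by (rule norm_le_running_max[OF n_le_N])
    thus "?a\<^sup>2 \<le> s\<^sup>2 * (running_max (mart ?f) N)\<^sup>2"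
      using s_pos by (simp add: power_mult_distrib power_mono)
    have "norm (drift_gap ?f ?n) \<le> real N * (L * \<delta>)"
      using n_le_N one_le_L \<delta>_nonneg by (intro order_trans[OF norm_drift_gap_le mult_right_mono]) auto
    hence "(norm (drift_gap ?f ?n))\<^sup>2 \<le> (real N * (L * \<delta>))\<^sup>2" by (intro power_mono) auto
    thus "?c\<^sup>2 \<le> s ^ 4 * (real N * (L * \<delta>))\<^sup>2"
      using s_pos by (simp add: power_mult_distrib power2_eq_square[of "s\<^sup>2"] flip: power_mult)
  qed auto
  also have "\<dots> \<le> error_bound ?f"
  proof -
    have "s\<^sup>2 * (running_max (mart ?f) N)\<^sup>2 \<le> s\<^sup>2 * (4 * real N * (L * \<delta> * L)\<^sup>2
        + (\<Sum>j<N. inner (doob_weight ?f j) (mart_incr ?f j)))"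
      using running_max_mart_sq_le by (intro mult_left_mono) auto
    thus ?thesis unfolding error_bound_def error_const_def by (simp add: algebra_simps)
  qed
  finally show ?thesis .
qed

lemma error_const_le: "error_const \<le> 136 * L ^ 8 / sqrt (real N)"
proof -
  have "s ^ 4 * (real N)\<^sup>2 = (s\<^sup>2 * real N)\<^sup>2" by (simp add: power_mult_distrib flip: power_mult)
  hence "2 * s ^ 4 * (real N * (L * \<delta>))\<^sup>2 = 2 * L\<^sup>2 * \<delta>\<^sup>2"
    using s_sq_mult_N by (simp add: power_mult_distrib)
  moreover have "2 * s\<^sup>2 * (4 * real N * (L * \<delta> * L)\<^sup>2) = 8 * L ^ 4 * \<delta>\<^sup>2"
    using s_sq_mult_N by (simp add: power_mult_distrib algebra_simps)
  ultimately have "error_const = 8 * L ^ 4 * \<delta>\<^sup>2 + 2 * L\<^sup>2 * \<delta>\<^sup>2"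
    unfolding error_const_def by simp
  also have "\<dots> \<le> 8 * L ^ 4 * (4 * s * L ^ 4) + 2 * L\<^sup>2 * (4 * s * L ^ 4)"
    using \<delta>_sq_le by (intro add_mono mult_left_mono) auto
  also have "\<dots> \<le> 40 * s * L ^ 8"
  proof -
    have "L ^ 6 \<le> L ^ 8" using one_le_L by (intro power_increasing) auto
    thus ?thesis using s_pos by (simp add: algebra_simps flip: power_add)
  qed
  also have "\<dots> \<le> 136 * L ^ 8 / sqrt (real N)"
    using s_pos by (simp add: s_def divide_inverse)
  finally show ?thesis .
qed

end

locale euler_noise = euler_scheme \<sigma> b L x0 N + prob_space M
  for \<sigma> :: "real^'d \<Rightarrow> real^'d^'d" and b L x0 N and M :: "'a measure" +
  fixes \<xi> :: "nat \<Rightarrow> 'a \<Rightarrow> real^'d"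
  assumes noise_indep: "indep_vars (\<lambda>_. borel) \<xi> {1..}"
    and noise_distr: "\<And>n. n \<ge> 1 \<Longrightarrow> distr M borel (\<xi> n) = distr M borel (\<xi> 1)"
    and noise_mean: "\<And>i. expectation (\<lambda>w. \<xi> 1 w $ i) = 0"
    and noise_bounded: "AE w in M. norm (\<xi> 1 w) \<le> L"
begin

lemma noise_measurable: "l \<ge> 1 \<Longrightarrow> \<xi> l \<in> borel_measurable M"
  using noise_indep unfolding indep_vars_def by auto

lemma AE_noise_bounded: "AE w in M. \<forall>l\<ge>1. norm (\<xi> l w) \<le> L"
proof -
  have ball: "{v \<in> space borel. norm v \<le> L} \<in> sets (borel :: (real^'d) measure)" by measurable
  have "AE w in M. norm (\<xi> l w) \<le> L" if "l \<ge> 1" for l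
  proof -
    have "AE v in distr M borel (\<xi> 1). norm v \<le> L"
      using noise_bounded by (subst AE_distr_iff[OF noise_measurable ball]) auto
    hence "AE v in distr M borel (\<xi> l). norm v \<le> L" unfolding noise_distr[OF that] .
    thus ?thesis using AE_distr_iff[OF noise_measurable[OF that] ball] by simp
  qed
  hence "AE w in M. l \<ge> 1 \<longrightarrow> norm (\<xi> l w) \<le> L" for l
    by (cases "l \<ge> 1") auto
  thus ?thesis unfolding AE_all_countable by auto
qed

lemma integral_trunc_noise_eq_0: "(\<integral>w. trunc_noise (\<xi> (Suc j) w) $ i \<partial>M) = 0"
proof -
  have G: "(\<lambda>v. trunc_noise v $ i) \<in> borel_measurable borel" by measurable
  have "(\<integral>w. trunc_noise (\<xi> (Suc j) w) $ i \<partial>M) = (\<integral>v. trunc_noise v $ i \<partial>distr M borel (\<xi> (Suc j)))"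
    using noise_measurable G by (intro integral_distr[symmetric]) auto
  also have "\<dots> = (\<integral>w. trunc_noise (\<xi> 1 w) $ i \<partial>M)"
    using noise_measurable G by (subst noise_distr) (auto intro: integral_distr)
  also have "\<dots> = (\<integral>w. \<xi> 1 w $ i \<partial>M)"
    using AE_noise_bounded noise_measurable[of 1]
    by (intro integral_cong_AE) (auto simp: trunc_noise_def elim!: eventually_mono)
  finally show ?thesis using noise_mean by simp
qed

lemma doob_term_integrable_and_mean_zero:
  "integrable M (\<lambda>w. inner (doob_weight (\<lambda>l. \<xi> l w) j) (mart_incr (\<lambda>l. \<xi> l w) j))"
  "(\<integral>w. inner (doob_weight (\<lambda>l. \<xi> l w) j) (mart_incr (\<lambda>l. \<xi> l w) j) \<partial>M) = 0"
proof -
  define extend :: "(nat \<Rightarrow> real^'d) \<Rightarrow> nat \<Rightarrow> real^'d"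
    where "extend g l = (if l \<in> {1..j} then g l else 0)" for g l
  define F where "F g = doob_weight (extend g) j v* \<sigma>_gap (extend g) j" for g
  have extend_measurable: "(\<lambda>g. extend g l) \<in> borel_measurable (PiM {1..j} (\<lambda>_. borel))" for l
  proof (cases "l \<in> {1..j}")
    case True
    thus ?thesis using measurable_component_singleton[OF True, of "\<lambda>_. borel"]
      by (simp add: extend_def)
  next
    case False
    hence "(\<lambda>g. extend g l) = (\<lambda>g. 0)" by (auto simp: extend_def)
    thus ?thesis by simp
  qed
  have F_measurable: "F \<in> borel_measurable (PiM {1..j} (\<lambda>_. borel))"
    unfolding F_def using extend_measurable by measurable
  have F_bounded: "norm (F g) \<le> 12 * real j * (L * \<delta> * L) * (L * \<delta>)" for g
    unfolding F_def using norm_doob_weight_le norm_\<sigma>_gap_le \<delta>_nonneg one_le_L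
    by (intro order_trans[OF norm_vector_matrix_mult_le mult_mono]) auto
  have inner_eq: "inner (doob_weight f j) (mart_incr f j)
      = inner (F (restrict f {1..j})) (trunc_noise (f (Suc j)))" for f
  proof -
    have "doob_weight (extend (restrict f {1..j})) j = doob_weight f j"
      and "\<sigma>_gap (extend (restrict f {1..j})) j = \<sigma>_gap f j"
      by (auto intro: doob_weight_cong \<sigma>_gap_cong simp: extend_def)
    thus ?thesis unfolding F_def mart_incr_def by (simp add: dot_lmul_matrix)
  qed
  note mean_zero = indep_vars_integral_inner_past_next_eq_0[OF noise_indep F_measurable F_bounded
      trunc_noise_measurable norm_trunc_noise_le integral_trunc_noise_eq_0]
  show "integrable M (\<lambda>w. inner (doob_weight (\<lambda>l. \<xi> l w) j) (mart_incr (\<lambda>l. \<xi> l w) j))"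
    "(\<integral>w. inner (doob_weight (\<lambda>l. \<xi> l w) j) (mart_incr (\<lambda>l. \<xi> l w) j) \<partial>M) = 0"
    unfolding inner_eq using mean_zero by simp_all
qed

lemma nn_integral_error_bound: "(\<integral>\<^sup>+ w. ennreal (error_bound (\<lambda>l. \<xi> l w)) \<partial>M) = ennreal error_const"
proof -
  let ?I = "\<lambda>j w. inner (doob_weight (\<lambda>l. \<xi> l w) j) (mart_incr (\<lambda>l. \<xi> l w) j)"
  note doob_term = doob_term_integrable_and_mean_zero
  have error_bound_eq: "error_bound (\<lambda>l. \<xi> l w) = error_const + 2 * s\<^sup>2 * (\<Sum>j<N. ?I j w)" for w
    by (simp add: error_bound_def)
  have "integrable M (\<lambda>w. 2 * s\<^sup>2 * (\<Sum>j<N. ?I j w))"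
    using doob_term(1) by (intro integrable_mult_right Bochner_Integration.integrable_sum) auto
  hence "integrable M (\<lambda>w. error_bound (\<lambda>l. \<xi> l w))"
    "(\<integral>w. error_bound (\<lambda>l. \<xi> l w) \<partial>M) = error_const"
    unfolding error_bound_eq using doob_term by (simp_all add: prob_space)
  moreover have "AE w in M. 0 \<le> error_bound (\<lambda>l. \<xi> l w)"
    using AE_noise_bounded
  proof eventually_elim
    case (elim w)
    show ?case
      by (rule order_trans[OF zero_le_power2 norm_Xt_diff_Xhat_sq_le[of \<xi> w 0]]) (use elim in auto)
  qed
  ultimately show ?thesis by (simp add: nn_integral_eq_integral)
qed

lemma AE_sup_error_le_error_bound:
  "AE w in M. (SUP t\<in>{0..1::real}. ennreal ((norm (Xt \<sigma> b \<xi> x0 N t w - Xhat \<sigma> b \<xi> x0 N t w))\<^sup>2))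
     \<le> ennreal (error_bound (\<lambda>l. \<xi> l w))"
  using AE_noise_bounded
proof eventually_elim
  case (elim w)
  show ?case
    by (intro SUP_least ennreal_leI norm_Xt_diff_Xhat_sq_le) (use elim in auto)
qed

end

theorem lemma3p1:
  fixes M :: "'a measure"
    and \<sigma> :: "real^'d \<Rightarrow> real^'d^'d" and b :: "real^'d \<Rightarrow> real^'d"
    and \<xi> :: "nat \<Rightarrow> 'a \<Rightarrow> real^'d" and x0 :: "real^'d"
    and L :: real and N :: nat
  assumes "prob_space M"
    and "L \<ge> 1"
    and "\<And>x. norm (\<sigma> x) \<le> L" and "\<And>x. norm (b x) \<le> L"
    and "\<And>x y. norm (\<sigma> x - \<sigma> y) \<le> L * norm (x - y)"
    and "\<And>x y. norm (b x - b y) \<le> L * norm (x - y)"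
    and "\<And>n. n \<ge> 1 \<Longrightarrow> \<xi> n \<in> borel_measurable M"
    and "prob_space.indep_vars M (\<lambda>_. borel) \<xi> {1..}"
    and "\<And>n. n \<ge> 1 \<Longrightarrow> distr M borel (\<xi> n) = distr M borel (\<xi> 1)"
    and "\<And>i. prob_space.expectation M (\<lambda>w. \<xi> 1 w $ i) = 0"
    and "\<And>i j. prob_space.expectation M (\<lambda>w. \<xi> 1 w $ i * \<xi> 1 w $ j) = (if i = j then 1 else 0)"
    and "AE w in M. norm (\<xi> 1 w) \<le> L"
    and "N \<ge> 1"
  shows "(\<integral>\<^sup>+ w. (SUP t\<in>{0..1::real}. ennreal ((norm (Xt \<sigma> b \<xi> x0 N t w - Xhat \<sigma> b \<xi> x0 N t w))\<^sup>2)) \<partial>M)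
           \<le> ennreal (136 * L ^ 8 / sqrt (real N))"
proof -
  interpret prob_space M by (fact assms(1))
  interpret euler_noise \<sigma> b L x0 N M \<xi>
    by unfold_locales (fact assms)+
  have "(\<integral>\<^sup>+ w. (SUP t\<in>{0..1::real}. ennreal ((norm (Xt \<sigma> b \<xi> x0 N t w - Xhat \<sigma> b \<xi> x0 N t w))\<^sup>2)) \<partial>M)
      \<le> (\<integral>\<^sup>+ w. ennreal (error_bound (\<lambda>l. \<xi> l w)) \<partial>M)"
    by (rule nn_integral_mono_AE[OF AE_sup_error_le_error_bound])
  also have "\<dots> = ennreal error_const"
    by (rule nn_integral_error_bound)
  also have "\<dots> \<le> ennreal (136 * L ^ 8 / sqrt (real N))"
    by (rule ennreal_leI[OF error_const_le])
  finally show ?thesis .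
qed

end
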